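(* Let $\omega\in\mathbb{F}_8$ be a root of $y^3+y+1$, so $\mathbb{F}_8=\mathbb{F}_2(\omega)$, and let $\mathcal{B}=\{1<\omega<\omega^2\}$ be the ordered basis of $\mathbb{F}_8$ over $\mathbb{F}_2$. Suppose $G=G_1+\omega G_2+\omega^2 G_3\in M_{k\times n}(\mathbb{F}_8)$, with $G_i\in M_{k\times n}(\mathbb{F}_2)$ for $1\le i\le 3$, generates a linear code $C$ over $\mathbb{F}_8$. Then the subfield code $C^{(2)}$ of $C$ with respect to $\mathcal{B}$ is the binary linear code generated by the $3k\times n$ matrix $$G^{(2)}=\begin{pmatrix}G_1\\ G_3\\ G_2\end{pmatrix}.$$ Moreover, if $D=D_1+\omega D_2+\omega^2 D_3\subseteq\mathbb{F}_8^m$ with $D_i\subseteq\mathbb{F}_2^m$ ($1\le i\le 3$), then $C_D^{(2)}=C_{D^{(2)}}$, where $$D^{(2)}=\{(d_1,d_3,d_2)\in(\mathbb{F}_2^m)^3 : d_i\in D_i,\ 1\le i\le 3\},$$ the coordinate of $C_{D^{(2)}}$ indexed by $(d_1,d_3,d_2)$ corresponding to the coordinate of $C_D$ indexed by $d_1+\omega d_2+\omega^2 d_3$.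
   Context: For sets $D_1,D_2,D_3\subseteq\mathbb{F}_2^m$, $D_1+\omega D_2+\omega^2D_3=\{d_1+\omega d_2+\omega^2 d_3: d_i\in D_i\}\subseteq\mathbb{F}_8^m$. For an ordered finite set $D\subseteq\mathbb{F}_q^m$, $C_D=\{(v\cdot d)_{d\in D}: v\in\mathbb{F}_q^m\}$, where $v\cdot d=\sum_{i=1}^m v_id_i$. Given a linear code $C$ over $\mathbb{F}_{q^r}$ with generator matrix $(g_{ij})$ and an ordered basis $\{b_1<\dots<b_r\}$ of $\mathbb{F}_{q^r}$ over $\mathbb{F}_q$, the subfield code $C^{(q)}$ is the $\mathbb{F}_q$-linear code generated by the matrix obtained by replacing each entry $g_{ij}$ by the column $(\mathrm{Tr}_{q^r/q}(g_{ij}b_1),\dots,\mathrm{Tr}_{q^r/q}(g_{ij}b_r))^T$; here $C_D^{(2)}$ denotes the subfield code of $C_D$. *)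

theory Defs
  imports Main
begin

text \<open>We work inside an abstract finite field 'a with 8 elements
(any such field is F_8).
Vectors of length n are functions nat => 'a, normalised to be 0 at indices >= n.
Matrices are functions nat => nat => 'a (row index, column index) with explicit
dimensions.\<close>

definition F2 :: "'a::field set" where
  "F2 = {0, 1}"

definition binvecs :: "nat \<Rightarrow> (nat \<Rightarrow> 'a::field) set" where
  "binvecs m = {d. (\<forall>i<m. d i \<in> F2) \<and> (\<forall>i\<ge>m. d i = 0)}"

text \<open>The code of length n spanned by the k rows of the k x n matrix G,
with coefficients from the scalar set S (S = UNIV: linear code over 'a;
S = F2: binary linear code).\<close>
definition code_gen :: "'a::field set \<Rightarrow> nat \<Rightarrow> nat \<Rightarrow> (nat \<Rightarrow> nat \<Rightarrow> 'a) \<Rightarrow> (nat \<Rightarrow> 'a) set" where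
  "code_gen S k n G =
     {(\<lambda>j. if j < n then (\<Sum>i<k. c i * G i j) else 0) | c. \<forall>i<k. c i \<in> S}"

definition trace2 :: "nat \<Rightarrow> 'a::field \<Rightarrow> 'a" where
  "trace2 r x = (\<Sum>t<r. x ^ (2 ^ t))"

text \<open>Subfield (binary) code of the code generated by the k x n matrix G over F_{2^r},
w.r.t. the ordered basis bs = [b_1,...,b_r]: each entry g_ij is replaced by the
column (Tr(g_ij b_1),...,Tr(g_ij b_r))^T, giving an (r*k) x n matrix whose row
i*r + l (l < r) is (Tr(g_ij b_(l+1)))_j.\<close>
definition subfield_matrix :: "'a::field list \<Rightarrow> (nat \<Rightarrow> nat \<Rightarrow> 'a) \<Rightarrow> nat \<Rightarrow> nat \<Rightarrow> 'a" where
  "subfield_matrix bs G i' j =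
     trace2 (length bs) (G (i' div length bs) j * bs ! (i' mod length bs))"

definition subfield_code :: "'a::field list \<Rightarrow> nat \<Rightarrow> nat \<Rightarrow> (nat \<Rightarrow> nat \<Rightarrow> 'a) \<Rightarrow> (nat \<Rightarrow> 'a) set" where
  "subfield_code bs k n G = code_gen F2 (length bs * k) n (subfield_matrix bs G)"

definition stack3 :: "nat \<Rightarrow> (nat \<Rightarrow> nat \<Rightarrow> 'a) \<Rightarrow> (nat \<Rightarrow> nat \<Rightarrow> 'a) \<Rightarrow> (nat \<Rightarrow> nat \<Rightarrow> 'a) \<Rightarrow> nat \<Rightarrow> nat \<Rightarrow> 'a" where
  "stack3 k A B C i j = (if i < k then A i j else if i < 2 * k then B (i - k) j else C (i - 2 * k) j)"

text \<open>Defining-set code C_D for an ordered set D (given as a list ds of vectors of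
length m): C_D = {(v . d)_{d in D} : v in S^m}, where S is the field of scalars.\<close>
definition code_D :: "'a::field set \<Rightarrow> nat \<Rightarrow> (nat \<Rightarrow> 'a) list \<Rightarrow> (nat \<Rightarrow> 'a) set" where
  "code_D S m ds =
     {(\<lambda>j. if j < length ds then (\<Sum>i<m. v i * (ds ! j) i) else 0) | v. \<forall>i<m. v i \<in> S}"

definition gen_matrix_D :: "(nat \<Rightarrow> 'a) list \<Rightarrow> nat \<Rightarrow> nat \<Rightarrow> 'a" where
  "gen_matrix_D ds i j = (ds ! j) i"

definition concat3 :: "nat \<Rightarrow> (nat \<Rightarrow> 'a::zero) \<Rightarrow> (nat \<Rightarrow> 'a) \<Rightarrow> (nat \<Rightarrow> 'a) \<Rightarrow> nat \<Rightarrow> 'a" where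
  "concat3 m x y z i = (if i < m then x i else if i < 2 * m then y (i - m)
                        else if i < 3 * m then z (i - 2 * m) else 0)"

end

theory Submission
  imports Defs "HOL-Number_Theory.Residues"
begin

(* A field with 8 elements has characteristic 2, so the trace x + x^2 + x^4 is F_2-linear.
   From w^3 = w + 1 one finds Tr(1) = Tr(w^3) = 1 and Tr(w) = Tr(w^2) = Tr(w^4) = 0, so the
   trace-dual basis of 1, w, w^2 is 1, w^2, w: for binary g1, g2, g3 the traces of
   (g1 + w g2 + w^2 g3) * w^l for l = 0, 1, 2 are g1, g3, g2. Hence the rows of the subfield
   matrix of G are those of G1, G3, G2 interleaved, a row permutation of the stacked matrix,
   which generates the same code. The statement about C_D is the special case of the generator
   matrix whose columns are the elements of D; there, stacking rows becomes concatenating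
   the vectors (d1, d3, d2). *)

lemma CHAR_eq_2_if_card_power_2:
  assumes "card (UNIV :: 'a::{field,finite} set) = 2 ^ r"
  shows "CHAR('a) = 2"
proof -
  have "prime CHAR('a)"
    by (intro prime_CHAR_semidom finite_imp_CHAR_pos) simp
  moreover have "CHAR('a) dvd 2 ^ r"
    using CHAR_dvd_CARD[where 'a = 'a] assms by simp
  ultimately show ?thesis
    by (metis prime_dvd_power primes_dvd_imp_eq two_is_prime_nat)
qed

lemma trace2_add:
  fixes x y :: "'a::field"
  assumes "CHAR('a) = 2"
  shows "trace2 r (x + y) = trace2 r x + trace2 r y"
proof -
  have "(x + y) ^ 2 ^ t = x ^ 2 ^ t + y ^ 2 ^ t" for t
    by (rule freshmans_dream') (simp_all add: assms)
  then show ?thesis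
    unfolding trace2_def by (simp add: sum.distrib)
qed

lemma trace2_square:
  fixes x :: "'a::field"
  assumes "CHAR('a) = 2"
  shows "trace2 r (x ^ 2) = trace2 r x ^ 2"
proof -
  have "trace2 r x ^ 2 = (\<Sum>t<r. (x ^ 2 ^ t) ^ 2)"
    unfolding trace2_def by (rule freshmans_dream_sum'[where n = 1]) (simp_all add: assms)
  also have "\<dots> = trace2 r (x ^ 2)"
    unfolding trace2_def by (simp flip: power_mult add: mult.commute)
  finally show ?thesis ..
qed

lemma trace2_F2_mult:
  fixes x :: "'a::field"
  assumes "g \<in> F2"
  shows "trace2 r (g * x) = g * trace2 r x"
  using assms by (auto simp: F2_def trace2_def power_0_left)

lemma trace2_3_eq: "trace2 3 x = x + x ^ 2 + x ^ 4"
  by (simp add: trace2_def numeral_3_eq_3 lessThan_Suc)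

lemma trace2_powers_of_root:
  fixes \<omega> :: "'a::field"
  assumes char2: "CHAR('a) = 2" and root: "\<omega> ^ 3 + \<omega> + 1 = 0"
  shows "trace2 3 (1::'a) = 1" "trace2 3 \<omega> = 0" "trace2 3 (\<omega> ^ 2) = 0"
    "trace2 3 (\<omega> ^ 3) = 1" "trace2 3 (\<omega> ^ 4) = 0"
proof -
  have double: "x + x = 0" for x :: 'a
    using minus_CHAR_2[OF char2, of x x] by simp
  have "\<omega> ^ 3 = - (\<omega> + 1)"
    using root by (subst eq_neg_iff_add_eq_0) (simp add: add.assoc)
  then have w3: "\<omega> ^ 3 = \<omega> + 1"
    by (simp add: uminus_CHAR_2[OF char2])
  have w4: "\<omega> ^ 4 = \<omega> ^ 2 + \<omega>"
  proof -
    have "\<omega> ^ 4 = \<omega> * \<omega> ^ 3"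
      by (simp flip: power_Suc)
    then show ?thesis
      by (simp add: w3 algebra_simps power2_eq_square)
  qed
  show one: "trace2 3 (1::'a) = 1"
    using double[of 1] by (simp add: trace2_3_eq add.assoc)
  have "trace2 3 \<omega> = (\<omega> + \<omega>) + (\<omega> ^ 2 + \<omega> ^ 2)"
    by (simp add: trace2_3_eq w4 ac_simps)
  then show tr1: "trace2 3 \<omega> = 0"
    by (simp add: double)
  show tr2: "trace2 3 (\<omega> ^ 2) = 0"
    using tr1 by (simp add: trace2_square[OF char2])
  show "trace2 3 (\<omega> ^ 3) = 1"
    using one tr1 by (simp add: w3 trace2_add[OF char2])
  show "trace2 3 (\<omega> ^ 4) = 0"
    using tr1 tr2 by (simp add: w4 trace2_add[OF char2])
qed

lemma trace2_binary_coordinates: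
  fixes \<omega> :: "'a::field"
  assumes char2: "CHAR('a) = 2" and root: "\<omega> ^ 3 + \<omega> + 1 = 0"
    and g: "g1 \<in> F2" "g2 \<in> F2" "g3 \<in> F2" and l: "l < 3"
  shows "trace2 3 ((g1 + \<omega> * g2 + \<omega> ^ 2 * g3) * [1, \<omega>, \<omega> ^ 2] ! l) = [g1, g3, g2] ! l"
proof -
  have expand: "trace2 3 ((g1 + \<omega> * g2 + \<omega> ^ 2 * g3) * b)
      = g1 * trace2 3 b + g2 * trace2 3 (\<omega> * b) + g3 * trace2 3 (\<omega> ^ 2 * b)" for b
  proof -
    have "(g1 + \<omega> * g2 + \<omega> ^ 2 * g3) * b = g1 * b + g2 * (\<omega> * b) + g3 * (\<omega> ^ 2 * b)"
      by (simp add: algebra_simps)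
    then show ?thesis
      using g by (simp add: trace2_add[OF char2] trace2_F2_mult)
  qed
  have powers: "\<omega> * \<omega> = \<omega> ^ 2" "\<omega> ^ 2 * \<omega> = \<omega> ^ 3" "\<omega> * \<omega> ^ 2 = \<omega> ^ 3" "\<omega> ^ 2 * \<omega> ^ 2 = \<omega> ^ 4"
    by (simp_all flip: power_add power_Suc power_Suc2 power2_eq_square)
  from l consider "l = 0" | "l = 1" | "l = 2"
    by linarith
  then show ?thesis
    by cases (use expand[of 1] expand[of \<omega>] expand[of "\<omega> ^ 2"] in
        \<open>simp_all add: powers trace2_powers_of_root[OF char2 root]\<close>)
qed

lemma mult_add_less_mult:
  fixes r q b k :: nat
  assumes "r < b" "q < k"
  shows "r * k + q < b * k"
proof -
  have "r * k + q < (r + 1) * k"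
    using assms by simp
  also have "\<dots> \<le> b * k"
    using assms by (intro mult_right_mono) auto
  finally show ?thesis .
qed

lemma bij_interleaved_to_blocks:
  fixes b k :: nat
  shows "bij_betw (\<lambda>i. (i mod b) * k + i div b) {..<b * k} {..<b * k}"
proof (rule bij_betwI[where g = "\<lambda>i. (i mod k) * b + i div k"])
  have digits: "x mod b < b" "x div b < k" "x mod k < k" "x div k < b" if "x < b * k" for x
  proof -
    have "0 < b" "0 < k"
      using that by (auto intro!: Nat.gr0I)
    then show "x mod b < b" "x div b < k" "x mod k < k" "x div k < b"
      using that by (simp_all add: less_mult_imp_div_less mult.commute)
  qed
  show "(\<lambda>i. (i mod b) * k + i div b) \<in> {..<b * k} \<rightarrow> {..<b * k}"
    using digits by (auto intro: mult_add_less_mult)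
  show "(\<lambda>i. (i mod k) * b + i div k) \<in> {..<b * k} \<rightarrow> {..<b * k}"
    using digits mult_add_less_mult[of _ k _ b] by (auto simp: mult.commute[of b k])
  show "(((x mod b) * k + x div b) mod k) * b + ((x mod b) * k + x div b) div k = x"
    if "x \<in> {..<b * k}" for x
  proof -
    have "x div b < k"
      using that digits by simp
    then have "((x mod b) * k + x div b) div k = x mod b" "((x mod b) * k + x div b) mod k = x div b"
      by simp_all
    then show ?thesis
      by simp
  qed
  show "(((y mod k) * b + y div k) mod b) * k + ((y mod k) * b + y div k) div b = y"
    if "y \<in> {..<b * k}" for y
  proof -
    have "y div k < b"
      using that digits by simp
    then have "((y mod k) * b + y div k) div b = y mod k" "((y mod k) * b + y div k) mod b = y div k"
      by simp_all
    then show ?thesis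
      by simp
  qed
qed

lemma code_gen_reindex_subset:
  assumes bij: "bij_betw \<sigma> {..<N} {..<N}"
    and M: "\<forall>i<N. \<forall>j<n. M i j = M' (\<sigma> i) j"
  shows "code_gen S N n M \<subseteq> code_gen S N n M'"
proof
  fix w
  assume "w \<in> code_gen S N n M"
  then obtain c where w: "w = (\<lambda>j. if j < n then (\<Sum>i<N. c i * M i j) else 0)"
    and c: "\<forall>i<N. c i \<in> S"
    unfolding code_gen_def by blast
  define c' where "c' = c \<circ> inv_into {..<N} \<sigma>"
  have c'_\<sigma>: "c' (\<sigma> i) = c i" if "i < N" for i
    using that bij by (simp add: c'_def bij_betw_inv_into_left)
  have "c' i \<in> S" if "i < N" for i
    using that c bij_betw_apply[OF bij_betw_inv_into[OF bij]] by (simp add: c'_def)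
  moreover have "(\<Sum>i<N. c i * M i j) = (\<Sum>i<N. c' i * M' i j)" if "j < n" for j
  proof -
    have "(\<Sum>i<N. c i * M i j) = (\<Sum>i<N. c' (\<sigma> i) * M' (\<sigma> i) j)"
      using M that c'_\<sigma> by (intro sum.cong) auto
    also have "\<dots> = (\<Sum>i<N. c' i * M' i j)"
      by (rule sum.reindex_bij_betw[OF bij])
    finally show ?thesis .
  qed
  then have "w = (\<lambda>j. if j < n then (\<Sum>i<N. c' i * M' i j) else 0)"
    using w by auto
  ultimately show "w \<in> code_gen S N n M'"
    unfolding code_gen_def by blast
qed

lemma code_gen_reindex:
  assumes bij: "bij_betw \<sigma> {..<N} {..<N}"
    and M: "\<forall>i<N. \<forall>j<n. M i j = M' (\<sigma> i) j"
  shows "code_gen S N n M = code_gen S N n M'"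
proof
  show "code_gen S N n M \<subseteq> code_gen S N n M'"
    using bij M by (rule code_gen_reindex_subset)
  have "M' i j = M (inv_into {..<N} \<sigma> i) j" if "i < N" "j < n" for i j
    using that M bij bij_betw_apply[OF bij_betw_inv_into[OF bij]]
    by (simp add: bij_betw_inv_into_right)
  then show "code_gen S N n M' \<subseteq> code_gen S N n M"
    using bij_betw_inv_into[OF bij] by (intro code_gen_reindex_subset) auto
qed

lemma stack3_block:
  assumes "q < k" "r < 3"
  shows "stack3 k A B C (r * k + q) j = [A q j, B q j, C q j] ! r"
proof -
  from \<open>r < 3\<close> consider "r = 0" | "r = 1" | "r = 2"
    by linarith
  then show ?thesis
    by cases (use \<open>q < k\<close> in \<open>simp_all add: stack3_def\<close>)
qed

lemma stack3_eq_concat3: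
  assumes "i < 3 * m"
  shows "stack3 m A B C i j = concat3 m (\<lambda>q. A q j) (\<lambda>q. B q j) (\<lambda>q. C q j) i"
  using assms by (simp add: stack3_def concat3_def)

lemma code_gen_cong:
  assumes "\<And>i j. i < N \<Longrightarrow> j < n \<Longrightarrow> M i j = M' i j"
  shows "code_gen S N n M = code_gen S N n M'"
  using assms by (intro code_gen_reindex[OF bij_betw_id]) simp

lemma code_D_eq_code_gen: "code_D S m ds = code_gen S m (length ds) (gen_matrix_D ds)"
  unfolding code_D_def code_gen_def gen_matrix_D_def by simp

lemma subfield_code_binary_decomposition:
  fixes \<omega> :: "'a::field"
  assumes char2: "CHAR('a) = 2" and root: "\<omega> ^ 3 + \<omega> + 1 = 0"
    and bin: "\<forall>i<k. \<forall>j<n. G1 i j \<in> F2 \<and> G2 i j \<in> F2 \<and> G3 i j \<in> F2"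
    and dec: "\<forall>i<k. \<forall>j<n. G i j = G1 i j + \<omega> * G2 i j + \<omega> ^ 2 * G3 i j"
  shows "subfield_code [1, \<omega>, \<omega> ^ 2] k n G = code_gen F2 (3 * k) n (stack3 k G1 G3 G2)"
proof -
  have len: "length [1, \<omega>, \<omega> ^ 2] = 3"
    by simp
  have entries: "subfield_matrix [1, \<omega>, \<omega> ^ 2] G i j = stack3 k G1 G3 G2 ((i mod 3) * k + i div 3) j"
    if "i < 3 * k" "j < n" for i j
  proof -
    have q: "i div 3 < k" and r: "i mod 3 < 3"
      using that by auto
    have "subfield_matrix [1, \<omega>, \<omega> ^ 2] G i j = trace2 3 (G (i div 3) j * [1, \<omega>, \<omega> ^ 2] ! (i mod 3))"
      unfolding subfield_matrix_def len ..
    also have "\<dots> = [G1 (i div 3) j, G3 (i div 3) j, G2 (i div 3) j] ! (i mod 3)"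
      using bin dec q \<open>j < n\<close> trace2_binary_coordinates[OF char2 root _ _ _ r] by simp
    also have "\<dots> = stack3 k G1 G3 G2 ((i mod 3) * k + i div 3) j"
      by (rule stack3_block[OF q r, symmetric])
    finally show ?thesis .
  qed
  have "code_gen F2 (3 * k) n (subfield_matrix [1, \<omega>, \<omega> ^ 2] G) = code_gen F2 (3 * k) n (stack3 k G1 G3 G2)"
    using entries by (intro code_gen_reindex[OF bij_interleaved_to_blocks]) auto
  then show ?thesis
    unfolding subfield_code_def len .
qed

lemma subfield_code_of_defining_set:
  fixes \<omega> :: "'a::field"
  assumes char2: "CHAR('a) = 2" and root: "\<omega> ^ 3 + \<omega> + 1 = 0"
    and ts_bin: "set ts \<subseteq> binvecs m \<times> binvecs m \<times> binvecs m"
  defines "ds \<equiv> map (\<lambda>(d1, d2, d3). (\<lambda>i. d1 i + \<omega> * d2 i + \<omega> ^ 2 * d3 i)) ts"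
    and "ds2 \<equiv> map (\<lambda>(d1, d2, d3). concat3 m d1 d3 d2) ts"
  shows "subfield_code [1, \<omega>, \<omega> ^ 2] m (length ds) (gen_matrix_D ds) = code_D F2 (3 * m) ds2"
proof -
  define E1 E2 E3 where "E1 i j = fst (ts ! j) i" and "E2 i j = fst (snd (ts ! j)) i"
    and "E3 i j = snd (snd (ts ! j)) i" for i j
  have E_bin: "\<forall>i<m. \<forall>j<length ds. E1 i j \<in> F2 \<and> E2 i j \<in> F2 \<and> E3 i j \<in> F2"
  proof (intro allI impI)
    fix i j
    assume "i < m" "j < length ds"
    then have "ts ! j \<in> binvecs m \<times> binvecs m \<times> binvecs m"
      using ts_bin nth_mem[of j ts] by (auto simp: ds_def)
    then show "E1 i j \<in> F2 \<and> E2 i j \<in> F2 \<and> E3 i j \<in> F2"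
      using \<open>i < m\<close> by (auto simp: E1_def E2_def E3_def binvecs_def)
  qed
  have E_dec: "\<forall>i<m. \<forall>j<length ds. gen_matrix_D ds i j = E1 i j + \<omega> * E2 i j + \<omega> ^ 2 * E3 i j"
    by (simp add: ds_def gen_matrix_D_def E1_def E2_def E3_def split: prod.split)
  have "subfield_code [1, \<omega>, \<omega> ^ 2] m (length ds) (gen_matrix_D ds)
      = code_gen F2 (3 * m) (length ds) (stack3 m E1 E3 E2)"
    by (rule subfield_code_binary_decomposition[OF char2 root E_bin E_dec])
  also have "\<dots> = code_gen F2 (3 * m) (length ds2) (gen_matrix_D ds2)"
  proof -
    have entries: "stack3 m E1 E3 E2 i j = gen_matrix_D ds2 i j" if "i < 3 * m" "j < length ds" for i j
      unfolding stack3_eq_concat3[OF that(1)] using that(2)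
      by (simp add: ds_def ds2_def gen_matrix_D_def E1_def E2_def E3_def split: prod.split)
    have "length ds2 = length ds"
      by (simp add: ds_def ds2_def)
    then show ?thesis
      using entries by (simp only:) (rule code_gen_cong)
  qed
  also have "\<dots> = code_D F2 (3 * m) ds2"
    by (rule code_D_eq_code_gen[symmetric])
  finally show ?thesis .
qed

theorem mainTheorem1:
  fixes \<omega> :: "'a::{field,finite}"
    and k n m :: nat
    and G G1 G2 G3 :: "nat \<Rightarrow> nat \<Rightarrow> 'a"
    and D1 D2 D3 :: "(nat \<Rightarrow> 'a) set"
    and ts :: "((nat \<Rightarrow> 'a) \<times> (nat \<Rightarrow> 'a) \<times> (nat \<Rightarrow> 'a)) list"
  assumes card8: "card (UNIV :: 'a set) = 8"
    and root: "\<omega> ^ 3 + \<omega> + 1 = 0"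
    and G_bin: "\<forall>i<k. \<forall>j<n. G1 i j \<in> F2 \<and> G2 i j \<in> F2 \<and> G3 i j \<in> F2"
    and G_dec: "\<forall>i<k. \<forall>j<n. G i j = G1 i j + \<omega> * G2 i j + \<omega> ^ 2 * G3 i j"
    and D_bin: "D1 \<subseteq> binvecs m" "D2 \<subseteq> binvecs m" "D3 \<subseteq> binvecs m"
    and ts_enum: "distinct ts" "set ts = D1 \<times> D2 \<times> D3"
  shows "subfield_code [1, \<omega>, \<omega> ^ 2] k n G = code_gen F2 (3 * k) n (stack3 k G1 G3 G2)
    \<and> (let ds = map (\<lambda>(d1, d2, d3). (\<lambda>i. d1 i + \<omega> * d2 i + \<omega> ^ 2 * d3 i)) ts;
           ds2 = map (\<lambda>(d1, d2, d3). concat3 m d1 d3 d2) ts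
       in subfield_code [1, \<omega>, \<omega> ^ 2] m (length ds) (gen_matrix_D ds) = code_D F2 (3 * m) ds2)"
proof -
  have char2: "CHAR('a) = 2"
    using CHAR_eq_2_if_card_power_2[of 3] card8 by simp
  have "set ts \<subseteq> binvecs m \<times> binvecs m \<times> binvecs m"
    using ts_enum(2) D_bin by auto
  then show ?thesis
    using subfield_code_binary_decomposition[OF char2 root G_bin G_dec]
      subfield_code_of_defining_set[OF char2 root]
    by (simp add: Let_def)
qed

end
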